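(* Let $P$ be a protocol for anonymous transmissions (achieving sender anonymity) among $n$ players in which the only resources available are pairwise shared secret key bits, a reliable broadcast channel and public communication. Then every node of the key-sharing graph $G=(V,E)$ of $P$ has degree at least $2$ (otherwise the anonymity of a player of degree $1$ can be broken by his unique neighbour).
   Context: The key-sharing graph of the protocol is the undirected graph $G=(V,E)$ whose nodes are the players, with an edge between nodes $i$ and $j$ iff $i$ and $j$ share one bit of secret key. Sender anonymity: for an adversary corrupting a set of $t\le n-2$ players not including the sender $s$ and observing all communication $C$ and the randomness $G^t$ of the corrupted players, $\max_S\Pr[S=s\mid G^t,C]=\max_S\Pr[S=s]=1/(n-t)$, maximum over random variables $S$ depending only on $C$ and $G^t$. *)

theory Defs
  imports Complex_Main
begin

text \<open>
Players are 0,...,n-1. The key-sharing graph E is a set of 2-element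
sets {i,j} of players; each edge carries one uniformly random secret key bit,
independently.
A protocol runs R rounds of reliable public broadcast; in every round each
player i broadcasts a value computed (deterministically) from the key bits it
holds, its private input (Some m if it is the sender of message m, None
otherwise) and the public communication so far.
\<close>

definition key_graph :: "nat \<Rightarrow> nat set set \<Rightarrow> bool" where
  "key_graph n E \<longleftrightarrow> E \<subseteq> {e. \<exists>i j. i < n \<and> j < n \<and> i \<noteq> j \<and> e = {i, j}}"

definition key_assignments :: "nat set set \<Rightarrow> (nat set \<Rightarrow> bool) set" where
  "key_assignments E = {\<kappa>. \<forall>e. e \<notin> E \<longrightarrow> \<kappa> e = False}"

definition keys_of :: "nat set set \<Rightarrow> nat set \<Rightarrow> (nat set \<Rightarrow> bool) \<Rightarrow> (nat set \<Rightarrow> bool)" where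
  "keys_of E T \<kappa> = (\<lambda>e. if e \<in> E \<and> e \<inter> T \<noteq> {} then \<kappa> e else False)"

type_synonym ('m, 'b) protocol =
  "nat \<Rightarrow> (nat set \<Rightarrow> bool) \<Rightarrow> 'm option \<Rightarrow> 'b list list \<Rightarrow> 'b"

primrec run :: "nat \<Rightarrow> ('m, 'b) protocol \<Rightarrow> nat set set \<Rightarrow> (nat \<Rightarrow> 'm option)
                 \<Rightarrow> (nat set \<Rightarrow> bool) \<Rightarrow> nat \<Rightarrow> 'b list list" where
  "run n f E inp \<kappa> 0 = []"
| "run n f E inp \<kappa> (Suc r) = run n f E inp \<kappa> r @
      [map (\<lambda>i. f i (keys_of E {i} \<kappa>) (inp i) (run n f E inp \<kappa> r)) [0..<n]]"

definition transcript :: "nat \<Rightarrow> ('m, 'b) protocol \<Rightarrow> nat set set \<Rightarrow> nat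
                           \<Rightarrow> nat \<Rightarrow> 'm \<Rightarrow> (nat set \<Rightarrow> bool) \<Rightarrow> 'b list list" where
  "transcript n f E R s m \<kappa> = run n f E (\<lambda>i. if i = s then Some m else None) \<kappa> R"

definition transmits :: "nat \<Rightarrow> ('m, 'b) protocol \<Rightarrow> nat set set \<Rightarrow> nat \<Rightarrow> bool" where
  "transmits n f E R \<longleftrightarrow>
     (\<exists>dec :: nat \<Rightarrow> (nat set \<Rightarrow> bool) \<Rightarrow> 'b list list \<Rightarrow> 'm.
        \<forall>s<n. \<exists>r<n. r \<noteq> s \<and>
          (\<forall>m. \<forall>\<kappa>\<in>key_assignments E. dec r (keys_of E {r} \<kappa>) (transcript n f E R s m \<kappa>) = m))"

text \<open>Optimal guessing probability max_S Pr[S = s] of an adversary corrupting T,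
who sees the randomness (key bits) of T and the communication C, when the sender
s is uniform over the uncorrupted players and the keys are uniform:
  sum over views v of max over x of Pr[s = x, view = v].\<close>
definition guess_prob :: "nat \<Rightarrow> ('m, 'b) protocol \<Rightarrow> nat set set \<Rightarrow> nat
                          \<Rightarrow> nat set \<Rightarrow> 'm \<Rightarrow> real" where
  "guess_prob n f E R T m =
    (let H = {0..<n} - T; K = key_assignments E;
         view = (\<lambda>x \<kappa>. (keys_of E T \<kappa>, transcript n f E R x m \<kappa>))
     in (\<Sum>v \<in> (\<lambda>(x, \<kappa>). view x \<kappa>) ` (H \<times> K).
           Max ((\<lambda>x. real (card {\<kappa> \<in> K. view x \<kappa> = v}) / (real (card H) * real (card K))) ` H)))"

definition sender_anonymous :: "nat \<Rightarrow> ('m, 'b) protocol \<Rightarrow> nat set set \<Rightarrow> nat \<Rightarrow> bool" where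
  "sender_anonymous n f E R \<longleftrightarrow>
     (\<forall>T m. T \<subseteq> {0..<n} \<and> card T \<le> n - 2 \<longrightarrow> guess_prob n f E R T m = 1 / real (n - card T))"

definition degree :: "nat set set \<Rightarrow> nat \<Rightarrow> nat" where
  "degree E i = card {j. {i, j} \<in> E}"

end

theory Submission
  imports Defs
begin

text \<open>
If two players i and j share no key bit, an adversary corrupting all other n - 2 players
holds every key bit. Since the protocol is deterministic given the keys, anonymity between
i and j forces the communication to be the same whether i or j sends. Comparing the two
runs round by round, the broadcasts of i never depend on whether i holds the message, so
the communication when i sends is the silent one and the message cannot be decoded.
Hence any two players share a key: the key graph is complete, and every degree is n - 1.
\<close>

lemma length_run [simp]: "length (run n f E inp \<kappa> r) = r"
  by (induction r) auto

lemma take_run: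
  assumes "r \<le> R"
  shows "take r (run n f E inp \<kappa> R) = run n f E inp \<kappa> r"
  using assms
proof (induction R)
  case (Suc R)
  then show ?case
    by (cases "r = Suc R") (auto simp: le_Suc_eq)
qed simp

lemma run_fun_upd_eq:
  assumes eq: "run n f E inp1 \<kappa> R = run n f E inp2 \<kappa> R" and "i < n"
  shows "run n f E (inp1(i := inp2 i)) \<kappa> R = run n f E inp1 \<kappa> R"
proof -
  define inp where "inp = inp1(i := inp2 i)"
  let ?run = "\<lambda>input r. run n f E input \<kappa> r"
  let ?bcast = "\<lambda>input r p. f p (keys_of E {p} \<kappa>) (input p) (?run input r)"
  have prefix: "?run inp1 r = ?run inp2 r" if "r \<le> R" for r
    using take_run[OF that, of n f E inp1 \<kappa>] take_run[OF that, of n f E inp2 \<kappa>] eq by simp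
  have "?run inp r = ?run inp1 r" if "r \<le> R" for r
    using that
  proof (induction r)
    case 0
    then show ?case by simp
  next
    case (Suc r)
    have "map (?bcast inp1 r) [0..<n] = map (?bcast inp2 r) [0..<n]"
      using prefix[OF Suc.prems] unfolding run.simps append1_eq_conv by (rule conjunct2)
    then have "?bcast inp1 r i = ?bcast inp2 r i"
      using \<open>i < n\<close> by simp
    moreover have IH: "?run inp r = ?run inp1 r"
      using Suc by simp
    ultimately have "?bcast inp r p = ?bcast inp1 r p" for p
      using prefix[of r] Suc.prems by (cases "p = i") (simp_all add: inp_def)
    then show ?case
      using IH by simp
  qed
  then show ?thesis
    unfolding inp_def by simp
qed

lemma finite_key_graph: "key_graph n E \<Longrightarrow> finite E"
  unfolding key_graph_def by (rule finite_subset[of _ "Pow {0..<n}"]) auto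

lemma key_assignments_eq_image_Pow: "key_assignments E = (\<lambda>S e. e \<in> S) ` Pow E"
proof (intro equalityI subsetI)
  fix \<kappa> assume "\<kappa> \<in> key_assignments E"
  then have "\<kappa> = (\<lambda>e. e \<in> {e \<in> E. \<kappa> e})"
    unfolding key_assignments_def by auto
  then show "\<kappa> \<in> (\<lambda>S e. e \<in> S) ` Pow E" by blast
qed (auto simp: key_assignments_def)

lemma finite_key_assignments: "finite E \<Longrightarrow> finite (key_assignments E)"
  by (simp add: key_assignments_eq_image_Pow)

lemma guess_prob_ge_card_views:
  fixes n :: nat and T :: "nat set" and E :: "nat set set" and R :: nat
    and f :: "('m, 'b) protocol" and m :: 'm
  defines "H \<equiv> {0..<n} - T" and "K \<equiv> key_assignments E"
    and "view \<equiv> \<lambda>x \<kappa>. (keys_of E T \<kappa>, transcript n f E R x m \<kappa>)"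
  assumes "finite E"
  shows "real (card ((\<lambda>(x, \<kappa>). view x \<kappa>) ` (H \<times> K))) / (real (card H) * real (card K))
           \<le> guess_prob n f E R T m"
proof -
  let ?V = "(\<lambda>(x, \<kappa>). view x \<kappa>) ` (H \<times> K)"
  let ?p = "\<lambda>v x. real (card {\<kappa> \<in> K. view x \<kappa> = v}) / (real (card H) * real (card K))"
  have "1 / (real (card H) * real (card K)) \<le> Max (?p v ` H)" if "v \<in> ?V" for v
  proof -
    obtain x \<kappa> where x: "x \<in> H" "\<kappa> \<in> K" "v = view x \<kappa>"
      using \<open>v \<in> ?V\<close> by fast
    have "finite K"
      unfolding K_def using \<open>finite E\<close> by (rule finite_key_assignments)
    then have "0 < card {\<kappa> \<in> K. view x \<kappa> = v}"
      using x by (auto simp: card_gt_0_iff)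
    then have "1 / (real (card H) * real (card K)) \<le> ?p v x"
      by (simp add: divide_right_mono)
    also have "\<dots> \<le> Max (?p v ` H)"
      using x by (intro Max_ge) (auto simp: H_def)
    finally show ?thesis .
  qed
  then have "real (card ?V) * (1 / (real (card H) * real (card K))) \<le> (\<Sum>v\<in>?V. Max (?p v ` H))"
    by (metis (no_types, lifting) sum_bounded_below)
  then show ?thesis
    unfolding guess_prob_def Let_def H_def K_def view_def by simp
qed

text \<open>As T meets every edge, the adversary sees the whole key assignment, so the views of
sender x are pairwise distinct and the view of y at \<kappa>0 is yet another one: at least
card K + 1 views, each contributing at least 1 / (card H * card K).\<close>

lemma guess_prob_gt_if_transcripts_differ:
  fixes n :: nat and T :: "nat set"
  defines "H \<equiv> {0..<n} - T"
  assumes "finite E" and covers: "\<And>e. e \<in> E \<Longrightarrow> e \<inter> T \<noteq> {}"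
    and "x \<in> H" "y \<in> H" and \<kappa>0: "\<kappa>0 \<in> key_assignments E"
    and differ: "transcript n f E R x m \<kappa>0 \<noteq> transcript n f E R y m \<kappa>0"
  shows "1 / real (card H) < guess_prob n f E R T m"
proof -
  define K where "K = key_assignments E"
  define view where "view = (\<lambda>x \<kappa>. (keys_of E T \<kappa>, transcript n f E R x m \<kappa>))"
  let ?V = "(\<lambda>(x, \<kappa>). view x \<kappa>) ` (H \<times> K)"
  have keys: "keys_of E T \<kappa> = \<kappa>" if "\<kappa> \<in> K" for \<kappa>
    using that covers unfolding keys_of_def K_def key_assignments_def by auto
  have "finite K"
    unfolding K_def using \<open>finite E\<close> by (rule finite_key_assignments)
  have "finite H"
    unfolding H_def by simp
  have "view y \<kappa>0 \<notin> view x ` K"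
    using keys \<kappa>0 differ unfolding view_def K_def by auto
  moreover have "inj_on (view x) K"
    using keys unfolding inj_on_def view_def by auto
  ultimately have "card K + 1 = card (insert (view y \<kappa>0) (view x ` K))"
    using \<open>finite K\<close> by (simp add: card_image)
  also have "\<dots> \<le> card ?V"
    using \<open>x \<in> H\<close> \<open>y \<in> H\<close> \<kappa>0 \<open>finite H\<close> \<open>finite K\<close> unfolding K_def
    by (intro card_mono) force+
  finally have card_V: "card K + 1 \<le> card ?V" .
  have "0 < card H" "0 < card K"
    using \<open>x \<in> H\<close> \<open>finite H\<close> \<kappa>0 \<open>finite K\<close> unfolding K_def by (auto simp: card_gt_0_iff)
  then have "1 / real (card H) < real (card K + 1) / (real (card H) * real (card K))"
    by (simp add: field_simps)
  also have "\<dots> \<le> real (card ?V) / (real (card H) * real (card K))"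
    using card_V by (simp add: divide_right_mono)
  also have "\<dots> \<le> guess_prob n f E R T m"
    unfolding H_def K_def view_def using \<open>finite E\<close> by (rule guess_prob_ge_card_views)
  finally show ?thesis .
qed

lemma transcripts_eq_if_no_shared_key:
  assumes "key_graph n E" "sender_anonymous n f E R"
    and "i < n" "j < n" "i \<noteq> j" "{i, j} \<notin> E" "\<kappa> \<in> key_assignments E"
  shows "transcript n f E R i m \<kappa> = transcript n f E R j m \<kappa>"
proof (rule ccontr)
  define T where "T = {0..<n} - {i, j}"
  have H: "{0..<n} - T = {i, j}"
    unfolding T_def using assms(3,4) by auto
  have card_T: "card T = n - 2" "n - card T = 2"
    unfolding T_def using assms(3-5) by (simp_all add: card_Diff_subset)
  have covers: "e \<inter> T \<noteq> {}" if "e \<in> E" for e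
  proof
    obtain a b where ab: "a < n" "b < n" "a \<noteq> b" "e = {a, b}"
      using \<open>e \<in> E\<close> \<open>key_graph n E\<close> unfolding key_graph_def by blast
    assume "e \<inter> T = {}"
    then have "e = {i, j}"
      using ab unfolding T_def by auto
    with \<open>e \<in> E\<close> \<open>{i, j} \<notin> E\<close> show False
      by simp
  qed
  assume differ: "transcript n f E R i m \<kappa> \<noteq> transcript n f E R j m \<kappa>"
  have "1 / real (card ({0..<n} - T)) < guess_prob n f E R T m"
    by (rule guess_prob_gt_if_transcripts_differ[OF finite_key_graph[OF assms(1)] covers
          _ _ assms(7) differ]) (simp_all add: H)
  moreover have "guess_prob n f E R T m = 1 / real (n - card T)"
    using \<open>sender_anonymous n f E R\<close> card_T unfolding sender_anonymous_def T_def
    by (metis Diff_subset order_refl)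
  ultimately show False
    using card_T H \<open>i \<noteq> j\<close> by simp
qed

lemma transmits_transcript_inj:
  fixes f :: "('m, 'b) protocol"
  assumes "transmits n f E R" "s < n" "\<kappa> \<in> key_assignments E"
    and "transcript n f E R s m1 \<kappa> = transcript n f E R s m2 \<kappa>"
  shows "m1 = m2"
proof -
  obtain dec :: "nat \<Rightarrow> (nat set \<Rightarrow> bool) \<Rightarrow> 'b list list \<Rightarrow> 'm" and r where
    "\<forall>m. \<forall>\<kappa>\<in>key_assignments E. dec r (keys_of E {r} \<kappa>) (transcript n f E R s m \<kappa>) = m"
    using assms(1,2) unfolding transmits_def by blast
  then show ?thesis
    using assms(3,4) by metis
qed

theorem sender_anonymous_key_graph_complete:
  fixes f :: "('m, 'b) protocol" and m1 m2 :: 'm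
  assumes "m1 \<noteq> m2" and "key_graph n E" "transmits n f E R" "sender_anonymous n f E R"
    and "i < n" "j < n" "i \<noteq> j"
  shows "{i, j} \<in> E"
proof (rule ccontr)
  assume "{i, j} \<notin> E"
  let ?silent = "\<lambda>\<kappa>. run n f E (\<lambda>_. None) \<kappa> R"
  let ?\<kappa> = "\<lambda>_. False"
  have "?\<kappa> \<in> key_assignments E"
    by (simp add: key_assignments_def)
  have "transcript n f E R i m ?\<kappa> = ?silent ?\<kappa>" for m
  proof -
    let ?inp = "\<lambda>s p. if p = s then Some m else None"
    have "run n f E (?inp i) ?\<kappa> R = run n f E (?inp j) ?\<kappa> R"
      using transcripts_eq_if_no_shared_key[OF assms(2,4-7) \<open>{i, j} \<notin> E\<close> \<open>?\<kappa> \<in> key_assignments E\<close>]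
      unfolding transcript_def .
    from run_fun_upd_eq[OF this \<open>i < n\<close>] show ?thesis
      using \<open>i \<noteq> j\<close> unfolding transcript_def by (simp add: fun_upd_def cong: if_cong)
  qed
  then have "transcript n f E R i m1 ?\<kappa> = transcript n f E R i m2 ?\<kappa>"
    by simp
  then have "m1 = m2"
    by (rule transmits_transcript_inj[OF assms(3,5) \<open>?\<kappa> \<in> key_assignments E\<close>])
  with \<open>m1 \<noteq> m2\<close> show False ..
qed

lemma degree_eq_if_adjacent_to_all:
  assumes "key_graph n E" "i < n" "\<And>j. j < n \<Longrightarrow> i \<noteq> j \<Longrightarrow> {i, j} \<in> E"
  shows "degree E i = n - 1"
proof -
  have "{j. {i, j} \<in> E} = {0..<n} - {i}"
    using assms unfolding key_graph_def by (auto simp: doubleton_eq_iff)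
  then show ?thesis
    using \<open>i < n\<close> by (simp add: degree_def)
qed

theorem mainTheorem3:
  fixes n :: nat and E :: "nat set set" and R :: nat
    and f :: "('m, 'b) protocol"
  assumes "3 \<le> n"
    and "\<exists>m1 m2 :: 'm. m1 \<noteq> m2"
    and "key_graph n E"
    and "transmits n f E R"
    and "sender_anonymous n f E R"
  shows "\<forall>i<n. 2 \<le> degree E i"
proof (intro allI impI)
  fix i assume "i < n"
  obtain m1 m2 :: 'm where "m1 \<noteq> m2"
    using assms(2) by blast
  then have "degree E i = n - 1"
    by (rule degree_eq_if_adjacent_to_all[OF assms(3) \<open>i < n\<close>
          sender_anonymous_key_graph_complete[OF _ assms(3-5) \<open>i < n\<close>]])
  then show "2 \<le> degree E i"
    using \<open>3 \<le> n\<close> by simp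
qed

end
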